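(* Let $(\mathcal{S},\mathcal{A},P)$ be a finite communicating MDP and $V^*(s,g)$ the negative minimum expected number of steps to reach $g$ from $s$ (so $V^*(g,g)=0$). Let $\epsilon_V,\epsilon_\psi,\epsilon_\pi,\epsilon_{drift}\ge0$, and assume: (a) $V_\omega:\mathcal{S}\times\mathcal{S}\to\mathbb{R}$ satisfies $|V_\omega(s,g)-V^*(s,g)|\le\epsilon_V$ for all $s,g$; (b) $\phi:\mathcal{S}\times\mathcal{S}\to\mathcal{S}$ satisfies $\max(0,V_\omega(s,g)-V_\omega(s,\hat s)-V_\omega(\hat s,g))\le\epsilon_\psi$ for all $s,g$, with $\hat s=\phi(s,g)$. Fix $s_0,s_g\in\mathcal{S}$ and an integer $M\ge1$. Let $s_0,s_1,\dots,s_M$ be random states (with $s_0$ deterministic) and $C_0,\dots,C_{M-1}$ random nonnegative costs such that, writing $\hat s_k=\phi(s_k,s_g)$, for each $0\le k<M$: (c) $\mathbb{E}[C_k\mid s_k]\le -V^*(s_k,\hat s_k)+\epsilon_\pi$; (d) $\big|\mathbb{E}[V^*(s_{k+1},s_g)\mid s_k]-V^*(\hat s_k,s_g)\big|\le\epsilon_{drift}$; and (e) $s_M=s_g$ almost surely. Then $$\mathbb{E}\Big[\sum_{k=0}^{M-1}C_k\Big]\le -V^*(s_0,s_g)+M\,(\epsilon_\pi+3\epsilon_V+\epsilon_\psi+\epsilon_{drift}).$$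
   Context: Interpretation: at high-level step $k$ the agent at state $s_k$ proposes the subgoal $\hat s_k=\phi(s_k,s_g)$ using an anticipation model $\phi$, then runs a low-level goal-conditioned policy toward $\hat s_k$; $C_k$ is the number of steps (cost) of that segment and $s_{k+1}$ is the (random) state where it ends. A finite MDP is communicating if for any two states $s_i,s_j$ some policy reaches $s_j$ from $s_i$ with nonzero probability. Reward is $-1$ per step, so $-V^*(s,g)$ is the minimum expected hitting time of $g$ from $s$. $V_\omega$ is a learned approximation of $V^*$. *)

theory Defs
  imports "HOL-Probability.Probability"
begin

text \<open>A (general, history-dependent,
  randomized) policy maps the history of visited states to a distribution on actions.\<close>

type_synonym ('s, 'a) kernel = "'s \<Rightarrow> 'a \<Rightarrow> 's pmf"
type_synonym ('s, 'a) policy = "'s list \<Rightarrow> 'a pmf"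

text \<open>Distribution of the state history (s_0,...,s_n) (a list of length n+1)
  when starting in s and following policy pol.\<close>
fun traj :: "('s, 'a) kernel \<Rightarrow> ('s, 'a) policy \<Rightarrow> 's \<Rightarrow> nat \<Rightarrow> 's list pmf" where
  "traj P pol s 0 = return_pmf [s]"
| "traj P pol s (Suc n) =
     bind_pmf (traj P pol s n)
       (\<lambda>h. bind_pmf (pol h) (\<lambda>a. map_pmf (\<lambda>s'. h @ [s']) (P (last h) a)))"

text \<open>Expected hitting time of g: E[T] = sum_{n>=0} Pr[T > n], with
  T = min{n. s_n = g}; may be infinite.\<close>
definition hit_time :: "('s, 'a) kernel \<Rightarrow> ('s, 'a) policy \<Rightarrow> 's \<Rightarrow> 's \<Rightarrow> ennreal" where
  "hit_time P pol s g = (\<Sum>n. ennreal (measure_pmf.prob (traj P pol s n) {h. g \<notin> set h}))"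

definition communicating :: "('s, 'a) kernel \<Rightarrow> bool" where
  "communicating P \<longleftrightarrow>
     (\<forall>si sj. \<exists>pol n. measure_pmf.prob (traj P pol si n) {h. sj \<in> set h} > 0)"

text \<open>Optimal value with reward -1 per step: minus the minimum expected hitting time.\<close>
definition Vstar :: "('s, 'a) kernel \<Rightarrow> 's \<Rightarrow> 's \<Rightarrow> real" where
  "Vstar P s g = - enn2real (INF pol. hit_time P pol s g)"

end

theory Submission
  imports Defs
begin

text \<open>The optimal value is a potential for the hierarchical agent. Transferring the
  subgoal condition (b) from \<open>V\<omega>\<close> to \<open>V\<^sup>*\<close> costs \<open>3\<epsilon>V\<close>, and together with (c) and (d)
  it bounds the conditional expected cost of segment \<open>k\<close> by the conditional expected
  increase of the potential \<open>V\<^sup>*(s\<^sub>k, s\<^sub>g)\<close> plus \<open>\<epsilon>\<pi> + 3\<epsilon>V + \<epsilon>\<psi> + \<epsilon>drift\<close>. Taking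
  expectations and telescoping over \<open>k < M\<close> leaves \<open>E[V\<^sup>*(s\<^sub>M, s\<^sub>g)] - V\<^sup>*(s\<^sub>0, s\<^sub>g)\<close>, and the
  first term is at most \<open>0\<close>.\<close>

lemma Vstar_nonpos: "Vstar P x y \<le> 0"
  by (simp add: Vstar_def enn2real_nonneg)

lemma approx_triangle_transfer:
  fixes V W :: "'s \<Rightarrow> 's \<Rightarrow> real"
  assumes approx: "\<forall>x y. \<bar>W x y - V x y\<bar> \<le> eV"
    and triangle: "W x g - W x m - W m g \<le> e\<psi>"
  shows "V x g \<le> V x m + V m g + e\<psi> + 3 * eV"
proof -
  have "\<bar>W x g - V x g\<bar> \<le> eV" "\<bar>W x m - V x m\<bar> \<le> eV" "\<bar>W m g - V m g\<bar> \<le> eV"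
    using approx by blast+
  with triangle show ?thesis
    unfolding abs_le_iff by linarith
qed

lemma AE_segment_cost_le:
  fixes V W :: "'s \<Rightarrow> 's \<Rightarrow> real"
  assumes approx: "\<forall>x y. \<bar>W x y - V x y\<bar> \<le> eV"
    and anticipation: "\<forall>x y. max 0 (W x y - W x (\<phi> x y) - W (\<phi> x y) y) \<le> e\<psi>"
    and cost: "AE \<omega> in M. c \<omega> \<le> - V (x \<omega>) (\<phi> (x \<omega>) g) + e\<pi>"
    and drift: "AE \<omega> in M. \<bar>v \<omega> - V (\<phi> (x \<omega>) g) g\<bar> \<le> ed"
  shows "AE \<omega> in M. c \<omega> \<le> (e\<pi> + 3 * eV + e\<psi> + ed) - V (x \<omega>) g + v \<omega>"
  using cost drift
proof eventually_elim
  case (elim \<omega>)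
  have "V (x \<omega>) g \<le> V (x \<omega>) (\<phi> (x \<omega>) g) + V (\<phi> (x \<omega>) g) g + e\<psi> + 3 * eV"
    using anticipation by (intro approx_triangle_transfer[OF approx]) simp
  with elim show ?case
    by (simp add: abs_le_iff)
qed

lemma sum_le_telescope:
  fixes a b :: "nat \<Rightarrow> real"
  assumes "\<And>k. k < M \<Longrightarrow> a k \<le> b (Suc k) - b k + e"
  shows "(\<Sum>k<M. a k) \<le> b M - b 0 + real M * e"
proof -
  have "(\<Sum>k<M. a k) \<le> (\<Sum>k<M. b (Suc k) - b k + e)"
    using assms by (intro sum_mono) auto
  also have "\<dots> = b M - b 0 + real M * e"
    by (simp add: sum.distrib sum_lessThan_telescope)
  finally show ?thesis .
qed

lemma subalgebra_vimage_algebra: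
  assumes "f \<in> M \<rightarrow>\<^sub>M N"
  shows "subalgebra M (vimage_algebra (space M) f N)"
  using assms by (simp add: subalgebra_def sets_image_in_sets)

lemma (in finite_measure) sigma_finite_subalgebra_vimage_algebra:
  assumes "f \<in> M \<rightarrow>\<^sub>M N"
  shows "sigma_finite_subalgebra M (vimage_algebra (space M) f N)"
  using assms subalgebra_vimage_algebra
  by (intro finite_measure_subalgebra_is_sigma_finite finite_measure_subalgebra.intro
      finite_measure_axioms finite_measure_subalgebra_axioms.intro)

lemma (in finite_measure) integrable_comp_finite:
  fixes V :: "'s::finite \<Rightarrow> real"
  assumes "f \<in> M \<rightarrow>\<^sub>M count_space UNIV"
  shows "integrable M (\<lambda>x. V (f x))"
proof (rule integrable_const_bound)
  show "(\<lambda>x. V (f x)) \<in> borel_measurable M"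
    using assms by (rule measurable_compose) simp
  show "AE x in M. norm (V (f x)) \<le> (\<Sum>y\<in>UNIV. \<bar>V y\<bar>)"
    by (simp add: member_le_sum[where f = "\<lambda>y. \<bar>V y\<bar>"])
qed

lemma integrable_summand_of_nonneg:
  fixes f :: "'i \<Rightarrow> 'w \<Rightarrow> real"
  assumes "integrable M (\<lambda>x. \<Sum>i\<in>I. f i x)" "finite I" "i \<in> I"
    and "\<And>i. i \<in> I \<Longrightarrow> f i \<in> borel_measurable M"
    and "\<And>i x. i \<in> I \<Longrightarrow> x \<in> space M \<Longrightarrow> 0 \<le> f i x"
  shows "integrable M (f i)"
proof (rule Bochner_Integration.integrable_bound[OF assms(1)])
  show "f i \<in> borel_measurable M"
    using assms by blast
  show "AE x in M. norm (f i x) \<le> norm (\<Sum>i\<in>I. f i x)"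
  proof (rule AE_I2)
    fix x assume "x \<in> space M"
    then have "f i x \<le> (\<Sum>i\<in>I. f i x)"
      using assms by (intro member_le_sum) auto
    then show "norm (f i x) \<le> norm (\<Sum>i\<in>I. f i x)"
      using assms \<open>x \<in> space M\<close> by simp
  qed
qed

lemma (in sigma_finite_subalgebra) integral_le_of_real_cond_exp_le:
  assumes "integrable M X" "integrable M Y" "integrable M Z"
    and "AE x in M. real_cond_exp M F X x \<le> Z x + real_cond_exp M F Y x"
  shows "(\<integral>x. X x \<partial>M) \<le> (\<integral>x. Z x \<partial>M) + (\<integral>x. Y x \<partial>M)"
proof -
  have "(\<integral>x. X x \<partial>M) = (\<integral>x. real_cond_exp M F X x \<partial>M)"
    using real_cond_exp_int(2)[OF assms(1)] by simp
  also have "\<dots> \<le> (\<integral>x. Z x + real_cond_exp M F Y x \<partial>M)"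
    using assms by (intro integral_mono_AE) auto
  also have "\<dots> = (\<integral>x. Z x \<partial>M) + (\<integral>x. Y x \<partial>M)"
    using assms(2,3) real_cond_exp_int[OF assms(2)] by simp
  finally show ?thesis .
qed

lemma (in prob_space) expected_total_cost_le_potential_drift:
  fixes C G :: "nat \<Rightarrow> 'a \<Rightarrow> real"
  assumes total_int: "integrable M (\<lambda>x. \<Sum>k<n. C k x)"
    and C_meas: "\<And>k. k < n \<Longrightarrow> C k \<in> borel_measurable M"
    and C_nonneg: "\<And>k x. k < n \<Longrightarrow> x \<in> space M \<Longrightarrow> 0 \<le> C k x"
    and G_int: "\<And>k. k \<le> n \<Longrightarrow> integrable M (G k)"
    and F: "\<And>k. k < n \<Longrightarrow> sigma_finite_subalgebra M (F k)"
    and drift: "\<And>k. k < n \<Longrightarrow> AE x in M.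
      real_cond_exp M (F k) (C k) x \<le> e - G k x + real_cond_exp M (F k) (G (Suc k)) x"
  shows "(\<integral>x. (\<Sum>k<n. C k x) \<partial>M) \<le> (\<integral>x. G n x \<partial>M) - (\<integral>x. G 0 x \<partial>M) + real n * e"
proof -
  have C_int: "integrable M (C k)" if "k < n" for k
    using that C_meas C_nonneg
    by (intro integrable_summand_of_nonneg[OF total_int]) auto
  have step: "(\<integral>x. C k x \<partial>M) \<le> (\<integral>x. G (Suc k) x \<partial>M) - (\<integral>x. G k x \<partial>M) + e"
    if k: "k < n" for k
  proof -
    interpret sigma_finite_subalgebra M "F k"
      using F k .
    have "(\<integral>x. C k x \<partial>M) \<le> (\<integral>x. e - G k x \<partial>M) + (\<integral>x. G (Suc k) x \<partial>M)"
      using k C_int G_int drift by (intro integral_le_of_real_cond_exp_le) auto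
    also have "(\<integral>x. e - G k x \<partial>M) = e - (\<integral>x. G k x \<partial>M)"
      using k G_int by (simp add: prob_space)
    finally show ?thesis by simp
  qed
  have "(\<integral>x. (\<Sum>k<n. C k x) \<partial>M) = (\<Sum>k<n. (\<integral>x. C k x \<partial>M))"
    using C_int by (intro Bochner_Integration.integral_sum) auto
  also have "\<dots> \<le> (\<integral>x. G n x \<partial>M) - (\<integral>x. G 0 x \<partial>M) + real n * e"
    using step by (rule sum_le_telescope)
  finally show ?thesis .
qed

theorem theorem3:
  fixes P :: "('s::finite, 'a::finite) kernel"
    and V\<omega> :: "'s \<Rightarrow> 's \<Rightarrow> real"
    and \<phi> :: "'s \<Rightarrow> 's \<Rightarrow> 's"
    and \<epsilon>V \<epsilon>\<psi> \<epsilon>\<pi> \<epsilon>drift :: real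
    and s\<^sub>0 s\<^sub>g :: 's
    and M :: nat
    and Q :: "'w measure"
    and s :: "nat \<Rightarrow> 'w \<Rightarrow> 's"
    and C :: "nat \<Rightarrow> 'w \<Rightarrow> real"
  assumes comm: "communicating P"
    and eps_nonneg: "0 \<le> \<epsilon>V" "0 \<le> \<epsilon>\<psi>" "0 \<le> \<epsilon>\<pi>" "0 \<le> \<epsilon>drift"
    and a: "\<forall>x y. \<bar>V\<omega> x y - Vstar P x y\<bar> \<le> \<epsilon>V"
    and b: "\<forall>x y. max 0 (V\<omega> x y - V\<omega> x (\<phi> x y) - V\<omega> (\<phi> x y) y) \<le> \<epsilon>\<psi>"
    and M_ge: "M \<ge> 1"
    and prob: "prob_space Q"
    and s_meas: "\<forall>k\<le>M. s k \<in> Q \<rightarrow>\<^sub>M count_space UNIV"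
    and C_meas: "\<forall>k<M. C k \<in> borel_measurable Q"
    and C_nonneg: "\<forall>k<M. \<forall>\<omega>\<in>space Q. 0 \<le> C k \<omega>"
    and s0: "\<forall>\<omega>\<in>space Q. s 0 \<omega> = s\<^sub>0"
    and c: "\<forall>k<M. AE \<omega> in Q.
              real_cond_exp Q (vimage_algebra (space Q) (s k) (count_space UNIV)) (C k) \<omega>
                \<le> - Vstar P (s k \<omega>) (\<phi> (s k \<omega>) s\<^sub>g) + \<epsilon>\<pi>"
    and d: "\<forall>k<M. AE \<omega> in Q.
              \<bar>real_cond_exp Q (vimage_algebra (space Q) (s k) (count_space UNIV))
                  (\<lambda>\<omega>'. Vstar P (s (Suc k) \<omega>') s\<^sub>g) \<omega>
                - Vstar P (\<phi> (s k \<omega>) s\<^sub>g) s\<^sub>g\<bar> \<le> \<epsilon>drift"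
    and e: "AE \<omega> in Q. s M \<omega> = s\<^sub>g"
  shows "(\<integral>\<omega>. (\<Sum>k<M. C k \<omega>) \<partial>Q)
           \<le> - Vstar P s\<^sub>0 s\<^sub>g + real M * (\<epsilon>\<pi> + 3 * \<epsilon>V + \<epsilon>\<psi> + \<epsilon>drift)"
proof -
  interpret prob_space Q by (rule prob)
  define \<epsilon> where "\<epsilon> = \<epsilon>\<pi> + 3 * \<epsilon>V + \<epsilon>\<psi> + \<epsilon>drift"
  define F where "F k = vimage_algebra (space Q) (s k) (count_space UNIV)" for k
  define G where "G k \<omega> = Vstar P (s k \<omega>) s\<^sub>g" for k \<omega>
  show ?thesis
  proof (cases "integrable Q (\<lambda>\<omega>. \<Sum>k<M. C k \<omega>)")
    case False
    \<comment> \<open>the Bochner integral of a non-integrable function is \<open>0\<close>\<close>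
    moreover have "0 \<le> real M * \<epsilon>"
      using eps_nonneg by (simp add: \<epsilon>_def)
    ultimately show ?thesis
      using Vstar_nonpos[of P s\<^sub>0 s\<^sub>g] by (simp add: not_integrable_integral_eq \<epsilon>_def)
  next
    case True
    have drift: "AE \<omega> in Q. real_cond_exp Q (F k) (C k) \<omega>
        \<le> \<epsilon> - G k \<omega> + real_cond_exp Q (F k) (G (Suc k)) \<omega>" if "k < M" for k
      using AE_segment_cost_le[OF a b c[rule_format, OF that] d[rule_format, OF that]]
      unfolding F_def G_def \<epsilon>_def .
    have G_int: "integrable Q (G k)" if "k \<le> M" for k
      using s_meas that unfolding G_def
      by (auto intro: integrable_comp_finite[where V = "\<lambda>x. Vstar P x s\<^sub>g"])
    have F: "sigma_finite_subalgebra Q (F k)" if "k < M" for k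
      using s_meas that unfolding F_def by (simp add: sigma_finite_subalgebra_vimage_algebra)
    have "(\<integral>\<omega>. (\<Sum>k<M. C k \<omega>) \<partial>Q) \<le> (\<integral>\<omega>. G M \<omega> \<partial>Q) - (\<integral>\<omega>. G 0 \<omega> \<partial>Q) + real M * \<epsilon>"
      using True C_meas C_nonneg G_int F drift by (intro expected_total_cost_le_potential_drift) auto
    moreover have "(\<integral>\<omega>. G M \<omega> \<partial>Q) \<le> 0"
      using integral_nonneg_AE[of "\<lambda>\<omega>. - G M \<omega>" Q] by (simp add: G_def Vstar_nonpos)
    moreover have "(\<integral>\<omega>. G 0 \<omega> \<partial>Q) = Vstar P s\<^sub>0 s\<^sub>g"
      using s0 by (simp add: G_def prob_space cong: Bochner_Integration.integral_cong)
    ultimately show ?thesis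
      by (simp add: \<epsilon>_def)
  qed
qed

end
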